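(* Every metric space $(X,d)$ with the separated approximation property (SAP) has the locally finite approximation property (LFAP).
   Context: A metric space $(X,d)$ has the separated approximation property (SAP) if for each $\varepsilon>0$ there is a sequence of continuous maps $f_n:X\to X$, $n\in\omega$, such that each $f_n$ is $\varepsilon$-homotopic to $\mathrm{id}_X$ and $\inf_{n\ne m} d(f_n(X),f_m(X))>0$, where $d(A,B)=\inf\{d(a,b):a\in A,\ b\in B\}$. Two maps $f,g:A\to X$ are $\varepsilon$-homotopic if there is a homotopy $(h_t)_{t\in[0,1]}:A\to X$ with $h_0=f$, $h_1=g$ and $\operatorname{diam}\{h_t(a):t\in[0,1]\}\le\varepsilon$ for all $a\in A$. A topological space $X$ has the locally finite approximation property (LFAP) if for each open cover $\mathcal U$ of $X$ there is a sequence of continuous maps $f_n:X\to X$, $n\in\omega$, each $\mathcal U$-near to $\mathrm{id}_X$ (for every $x$ some $U\in\mathcal U$ contains both $x$ and $f_n(x)$), such that the family $(f_n(X))_{n\in\omega}$ is locally finite in $X$. *)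

theory Defs
  imports "HOL-Analysis.Analysis"
begin

text \<open>The metric space (X,d) is a subset S of a type of class metric_space, with the
  induced metric and the subspace topology.\<close>

definition eps_homotopic ::
  "real \<Rightarrow> 'a set \<Rightarrow> 'b::metric_space set \<Rightarrow> ('a::topological_space \<Rightarrow> 'b) \<Rightarrow> ('a \<Rightarrow> 'b) \<Rightarrow> bool" where
  "eps_homotopic e S T f g \<longleftrightarrow>
     (\<exists>h. continuous_on ({0..1::real} \<times> S) h \<and> h ` ({0..1} \<times> S) \<subseteq> T \<and>
          (\<forall>x\<in>S. h (0, x) = f x) \<and> (\<forall>x\<in>S. h (1, x) = g x) \<and>
          (\<forall>a\<in>S. diameter ((\<lambda>t. h (t, a)) ` {0..1}) \<le> e))"

text \<open>Separated approximation property. The condition inf_{n<>m} d(f_n X, f_m X) > 0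
  is written out as: there is delta > 0 with dist a b >= delta whenever
  a in f_n X, b in f_m X, n <> m.\<close>
definition SAP :: "'a::metric_space set \<Rightarrow> bool" where
  "SAP X \<longleftrightarrow>
     (\<forall>e>0. \<exists>f :: nat \<Rightarrow> 'a \<Rightarrow> 'a.
        (\<forall>n. continuous_on X (f n) \<and> f n ` X \<subseteq> X \<and> eps_homotopic e X X (f n) id) \<and>
        (\<exists>\<delta>>0. \<forall>n m. n \<noteq> m \<longrightarrow> (\<forall>a\<in>f n ` X. \<forall>b\<in>f m ` X. \<delta> \<le> dist a b)))"

definition LFAP :: "'a topology \<Rightarrow> bool" where
  "LFAP X \<longleftrightarrow>
     (\<forall>\<U>. (\<forall>U\<in>\<U>. openin X U) \<and> topspace X \<subseteq> \<Union>\<U> \<longrightarrow>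
        (\<exists>f :: nat \<Rightarrow> 'a \<Rightarrow> 'a.
           (\<forall>n. continuous_map X X (f n) \<and>
                (\<forall>x\<in>topspace X. \<exists>U\<in>\<U>. x \<in> U \<and> f n x \<in> U)) \<and>
           (\<forall>x\<in>topspace X. \<exists>V. openin X V \<and> x \<in> V \<and>
                finite {n. f n ` topspace X \<inter> V \<noteq> {}})))"

end

theory Submission
  imports Defs
begin

(* Given an open cover of X, the cover radius yields a Lebesgue function phi: continuous,
   positive, and the ball of radius phi x about x lies in one member of the cover.  So it
   suffices to build maps approx n with dist (approx n y) y < phi y whose images form a
   locally finite family (SAP_controlled_approximations).

   SAP gives, for each tolerance, a family of homotopies from maps with delta-separated
   images to the identity (separated_homotopies).  Choosing the tolerances eps_j recursively
   with eps_j <= 1/(4(j+1)) and eps_(j+1) <= delta_j / 4 gives a ladder of such families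
   (locale homotopy_ladder).  A point y of level k = floor (1 / phi y) is moved by the
   level-k and level-(k+1) homotopies, run up to times switch_k y and switch_(k+1) y; all
   other switches are 1 (the identity stage), so approx n agrees locally with a finite
   composite and is continuous.  As one of the two switches is 0, approx n y lies within
   eps_(j+1) of the separated image of h j n (0,-) for j = k or k + 1.  Near a point only
   finitely many levels occur, and at each level at most one n has its separated image
   near that point: this is local finiteness (locale controlled_ladder). *)


definition admissible_radii :: "'a::metric_space set \<Rightarrow> 'a set set \<Rightarrow> 'a \<Rightarrow> real set" where
  "admissible_radii X \<U> x = {r. 0 \<le> r \<and> r \<le> 1 \<and> (\<exists>U\<in>\<U>. ball x r \<inter> X \<subseteq> U)}"

definition cover_radius :: "'a::metric_space set \<Rightarrow> 'a set set \<Rightarrow> 'a \<Rightarrow> real" where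
  "cover_radius X \<U> x = Sup (admissible_radii X \<U> x)"

lemma bdd_above_admissible_radii: "bdd_above (admissible_radii X \<U> x)"
  unfolding admissible_radii_def by (rule bdd_aboveI[of _ 1]) auto

context
  fixes X :: "'a::metric_space set" and \<U> :: "'a set set"
  assumes opn: "\<forall>U\<in>\<U>. openin (top_of_set X) U" and cov: "X \<subseteq> \<Union>\<U>"
begin

lemma admissible_radius_exists:
  assumes "x \<in> X"
  shows "\<exists>r>0. r \<in> admissible_radii X \<U> x"
proof -
  obtain U where U: "U \<in> \<U>" "x \<in> U" using cov assms by auto
  then obtain T where T: "open T" "U = X \<inter> T" using opn by (auto simp: openin_open)
  then obtain e where e: "e > 0" "ball x e \<subseteq> T" using U open_contains_ball by blast
  have "ball x (min e 1) \<inter> X \<subseteq> U" using e T by auto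
  then have "min e 1 \<in> admissible_radii X \<U> x" using e U by (auto simp: admissible_radii_def)
  then show ?thesis using e by (intro exI[of _ "min e 1"]) simp
qed

lemma cover_radius_pos:
  assumes "x \<in> X"
  shows "0 < cover_radius X \<U> x"
proof -
  obtain r where r: "0 < r" "r \<in> admissible_radii X \<U> x"
    using admissible_radius_exists[OF assms] by blast
  have "r \<le> cover_radius X \<U> x"
    unfolding cover_radius_def using r(2) bdd_above_admissible_radii by (rule cSup_upper)
  then show ?thesis using r(1) by linarith
qed

lemma admissible_radius_above:
  assumes "x \<in> X" "s < cover_radius X \<U> x"
  obtains r where "r \<in> admissible_radii X \<U> x" "s < r"
proof -
  have "admissible_radii X \<U> x \<noteq> {}" using admissible_radius_exists[OF assms(1)] by blast
  then show ?thesis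
    using assms(2) that less_cSup_iff[OF _ bdd_above_admissible_radii] unfolding cover_radius_def
    by blast
qed

(* A ball of radius r in U contains the ball of radius r - dist x y around y, so the cover
   radius is 1-Lipschitz. *)
lemma cover_radius_lipschitz:
  assumes x: "x \<in> X" and y: "y \<in> X"
  shows "cover_radius X \<U> x - dist x y \<le> cover_radius X \<U> y"
proof (rule ccontr)
  assume "\<not> ?thesis"
  then obtain r where r: "r \<in> admissible_radii X \<U> x" "cover_radius X \<U> y + dist x y < r"
    using admissible_radius_above[OF x, of "cover_radius X \<U> y + dist x y"] by force
  then obtain U where U: "U \<in> \<U>" "ball x r \<inter> X \<subseteq> U" "r \<le> 1"
    unfolding admissible_radii_def by auto
  have "ball y (r - dist x y) \<subseteq> ball x r"
  proof
    fix z assume "z \<in> ball y (r - dist x y)"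
    then show "z \<in> ball x r" using dist_triangle[of x z y] by simp
  qed
  moreover have "0 \<le> r - dist x y" using r(2) cover_radius_pos[OF y] by linarith
  moreover have "r - dist x y \<le> 1" using U(3) zero_le_dist[of x y] by linarith
  ultimately have "r - dist x y \<in> admissible_radii X \<U> y"
    using U unfolding admissible_radii_def by blast
  then have "r - dist x y \<le> cover_radius X \<U> y"
    unfolding cover_radius_def using bdd_above_admissible_radii by (rule cSup_upper)
  then show False using r(2) by linarith
qed

lemma cover_radius_continuous: "continuous_on X (cover_radius X \<U>)"
  unfolding continuous_on_iff
proof (intro ballI allI impI)
  fix x e assume x: "x \<in> X" and e: "(0::real) < e"
  show "\<exists>d>0. \<forall>x'\<in>X. dist x' x < d \<longrightarrow> dist (cover_radius X \<U> x') (cover_radius X \<U> x) < e"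
  proof (intro exI[of _ e] conjI ballI impI)
    fix x' assume "x' \<in> X" "dist x' x < e"
    then show "dist (cover_radius X \<U> x') (cover_radius X \<U> x) < e"
      using cover_radius_lipschitz[OF x \<open>x' \<in> X\<close>] cover_radius_lipschitz[OF \<open>x' \<in> X\<close> x]
      by (auto simp: dist_real_def dist_commute)
  qed (rule e)
qed

(* Half the cover radius is strictly smaller than the supremum, hence admissible. *)
lemma cover_radius_inside:
  assumes x: "x \<in> X"
  shows "\<exists>U\<in>\<U>. ball x (cover_radius X \<U> x / 2) \<inter> X \<subseteq> U"
proof -
  have "cover_radius X \<U> x / 2 < cover_radius X \<U> x" using cover_radius_pos[OF x] by simp
  then obtain r where r: "r \<in> admissible_radii X \<U> x" "cover_radius X \<U> x / 2 < r"
    by (rule admissible_radius_above[OF x])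
  then obtain U where "U \<in> \<U>" "ball x r \<inter> X \<subseteq> U" unfolding admissible_radii_def by blast
  moreover have "ball x (cover_radius X \<U> x / 2) \<subseteq> ball x r"
    using r(2) by (intro subset_ball) simp
  ultimately show ?thesis by blast
qed

lemma lebesgue_function:
  obtains \<phi> :: "'a \<Rightarrow> real" where "continuous_on X \<phi>" "\<And>x. x \<in> X \<Longrightarrow> 0 < \<phi> x"
    "\<And>x. x \<in> X \<Longrightarrow> \<exists>U\<in>\<U>. ball x (\<phi> x) \<inter> X \<subseteq> U"
proof
  show "continuous_on X (\<lambda>x. cover_radius X \<U> x / 2)"
    using cover_radius_continuous by (intro continuous_on_divide continuous_on_const) auto
  show "0 < cover_radius X \<U> x / 2" if "x \<in> X" for x
    using cover_radius_pos[OF that] by simp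
  show "\<exists>U\<in>\<U>. ball x (cover_radius X \<U> x / 2) \<inter> X \<subseteq> U" if "x \<in> X" for x
    using cover_radius_inside[OF that] .
qed

end


lemma dist_le_diameter_image:
  fixes p :: "'a::metric_space \<Rightarrow> 'b::metric_space"
  assumes "continuous_on K p" "compact K" "t \<in> K" "s \<in> K" "diameter (p ` K) \<le> e"
  shows "dist (p t) (p s) \<le> e"
proof -
  have "bounded (p ` K)" using assms by (intro compact_imp_bounded compact_continuous_image)
  then have "dist (p t) (p s) \<le> diameter (p ` K)"
    by (rule diameter_bounded_bound) (use assms in auto)
  then show ?thesis using assms(5) by linarith
qed

(* The data SAP provides for one tolerance e: homotopies H n from maps H n (0,-) with
   delta-separated images to the identity, moving no point by more than e. *)
definition separated_homotopies ::
  "'a::metric_space set \<Rightarrow> real \<Rightarrow> (nat \<Rightarrow> real \<times> 'a \<Rightarrow> 'a) \<Rightarrow> real \<Rightarrow> bool" where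
  "separated_homotopies X e H \<delta> \<longleftrightarrow> 0 < \<delta> \<and>
     (\<forall>n. continuous_on ({0..1} \<times> X) (H n) \<and> H n ` ({0..1} \<times> X) \<subseteq> X \<and>
          (\<forall>x\<in>X. H n (1, x) = x) \<and> (\<forall>a\<in>X. \<forall>t\<in>{0..1}. dist (H n (t, a)) a \<le> e)) \<and>
     (\<forall>n m a b. n \<noteq> m \<longrightarrow> a \<in> X \<longrightarrow> b \<in> X \<longrightarrow> \<delta> \<le> dist (H n (0, a)) (H m (0, b)))"

lemma separated_homotopiesD:
  assumes "separated_homotopies X e H \<delta>"
  shows "0 < \<delta>" "continuous_on ({0..1} \<times> X) (H n)"
    "t \<in> {0..1} \<Longrightarrow> a \<in> X \<Longrightarrow> H n (t, a) \<in> X"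
    "a \<in> X \<Longrightarrow> H n (1, a) = a"
    "t \<in> {0..1} \<Longrightarrow> a \<in> X \<Longrightarrow> dist (H n (t, a)) a \<le> e"
    "n \<noteq> m \<Longrightarrow> a \<in> X \<Longrightarrow> b \<in> X \<Longrightarrow> \<delta> \<le> dist (H n (0, a)) (H m (0, b))"
  using assms unfolding separated_homotopies_def by (simp_all add: image_subset_iff)

lemma SAP_separated_homotopies:
  fixes X :: "'a::metric_space set"
  assumes "SAP X" "e > 0"
  shows "\<exists>H \<delta>. separated_homotopies X e H \<delta>"
proof -
  obtain f :: "nat \<Rightarrow> 'a \<Rightarrow> 'a" where
    f: "(\<forall>n. continuous_on X (f n) \<and> f n ` X \<subseteq> X \<and> eps_homotopic e X X (f n) id) \<and>
        (\<exists>\<delta>>0. \<forall>n m. n \<noteq> m \<longrightarrow> (\<forall>a\<in>f n ` X. \<forall>b\<in>f m ` X. \<delta> \<le> dist a b))"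
    using assms(1)[unfolded SAP_def, rule_format, OF assms(2)] ..
  then have hom: "\<And>n. eps_homotopic e X X (f n) id" by simp
  obtain \<delta> where \<delta>: "\<delta> > 0" "\<And>n m. n \<noteq> m \<Longrightarrow> \<forall>a\<in>f n ` X. \<forall>b\<in>f m ` X. \<delta> \<le> dist a b"
    using f by blast
  have "\<forall>n. \<exists>h. continuous_on ({0..1::real} \<times> X) h \<and> h ` ({0..1} \<times> X) \<subseteq> X \<and>
          (\<forall>x\<in>X. h (0, x) = f n x) \<and> (\<forall>x\<in>X. h (1, x) = x) \<and>
          (\<forall>a\<in>X. diameter ((\<lambda>t. h (t, a)) ` {0..1}) \<le> e)"
    using hom unfolding eps_homotopic_def by simp
  then obtain H :: "nat \<Rightarrow> real \<times> 'a \<Rightarrow> 'a" where "\<forall>n. continuous_on ({0..1} \<times> X) (H n) \<and>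
          H n ` ({0..1} \<times> X) \<subseteq> X \<and> (\<forall>x\<in>X. H n (0, x) = f n x) \<and> (\<forall>x\<in>X. H n (1, x) = x) \<and>
          (\<forall>a\<in>X. diameter ((\<lambda>t. H n (t, a)) ` {0..1}) \<le> e)"
    by (rule choice[THEN exE])
  then have H: "\<And>n. continuous_on ({0..1} \<times> X) (H n)" "\<And>n. H n ` ({0..1} \<times> X) \<subseteq> X"
       "\<And>n x. x \<in> X \<Longrightarrow> H n (0, x) = f n x" "\<And>n x. x \<in> X \<Longrightarrow> H n (1, x) = x"
       "\<And>n a. a \<in> X \<Longrightarrow> diameter ((\<lambda>t. H n (t, a)) ` {0..1}) \<le> e"
    by auto
  have track: "dist (H n (t, a)) (H n (s, a)) \<le> e"
    if "a \<in> X" "t \<in> {0..1}" "s \<in> {0..1}" for n a t s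
  proof (rule dist_le_diameter_image[where p = "\<lambda>t. H n (t, a)", OF _ _ that(2,3) H(5)[OF that(1)]])
    show "continuous_on {0..1} (\<lambda>t. H n (t, a))"
      by (rule continuous_on_compose2[OF H(1)]) (use that in \<open>auto intro!: continuous_intros\<close>)
  qed simp
  have sep: "\<delta> \<le> dist (H n (0, a)) (H m (0, b))" if "n \<noteq> m" "a \<in> X" "b \<in> X" for n m a b
    using \<delta>(2)[OF that(1)] that(2,3) by (simp add: H(3))
  have "dist (H n (t, a)) a \<le> e" if "a \<in> X" "t \<in> {0..1}" for n a t
    using track[OF that, of 1] H(4)[OF that(1)] by simp
  then have "separated_homotopies X e H \<delta>"
    unfolding separated_homotopies_def using \<delta>(1) H(1,2,4) sep by blast
  then show ?thesis by blast
qed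

lemma separated_homotopies_near_point:
  assumes "separated_homotopies X e H \<delta>"
  shows "finite {n. \<exists>a\<in>X. dist x (H n (0, a)) < \<delta> / 2}" (is "finite ?S")
proof -
  have unique: "n = m" if n: "n \<in> ?S" and m: "m \<in> ?S" for n m
  proof (rule ccontr)
    assume "n \<noteq> m"
    obtain a b where ab: "a \<in> X" "b \<in> X" "dist x (H n (0, a)) < \<delta> / 2" "dist x (H m (0, b)) < \<delta> / 2"
      using n m by blast
    then have "\<delta> \<le> dist (H n (0, a)) (H m (0, b))"
      using separated_homotopiesD(6)[OF assms \<open>n \<noteq> m\<close>] by blast
    then show False using ab dist_triangle3[of "H n (0, a)" "H m (0, b)" x] by linarith
  qed
  show ?thesis
  proof (cases "?S = {}")
    case False
    then obtain n where "n \<in> ?S" by blast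
    then have "?S \<subseteq> {n}" using unique by blast
    then show ?thesis by (rule finite_subset) simp
  qed simp
qed


(* Tolerances of the ladder: eps_j <= 1/(4(j+1)), and eps_(j+1) <= D eps_j / 4 where
   D e is the separation achieved for tolerance e. *)
primrec tolerance :: "(real \<Rightarrow> real) \<Rightarrow> nat \<Rightarrow> real" where
  "tolerance D 0 = 1/4"
| "tolerance D (Suc j) = min (1 / (4 * real (j + 2))) (D (tolerance D j) / 4)"

lemma tolerance_small: "tolerance D j \<le> 1 / (4 * real (Suc j))"
  by (cases j) (simp_all add: add.commute)

lemma tolerance_pos:
  assumes "\<And>e. 0 < e \<Longrightarrow> 0 < D e"
  shows "0 < tolerance D j"
  by (induction j) (simp_all add: assms)

locale homotopy_ladder =
  fixes X :: "'a::metric_space set" and h :: "nat \<Rightarrow> nat \<Rightarrow> real \<times> 'a \<Rightarrow> 'a"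
    and eps del :: "nat \<Rightarrow> real"
  assumes separated: "\<And>j. separated_homotopies X (eps j) (h j) (del j)"
    and eps_small: "\<And>j. eps j \<le> 1 / (4 * real (Suc j))"
    and eps_next: "\<And>j. eps (Suc j) \<le> del j / 4"
begin

lemmas del_pos = separated_homotopiesD(1)[OF separated]
  and h_cont = separated_homotopiesD(2)[OF separated]
  and h_into = separated_homotopiesD(3)[OF separated]
  and h_end = separated_homotopiesD(4)[OF separated]
  and h_close = separated_homotopiesD(5)[OF separated]

end

lemma SAP_homotopy_ladder:
  fixes X :: "'a::metric_space set"
  assumes "SAP X"
  shows "\<exists>h eps del. homotopy_ladder X h eps del"
proof -
  have "\<forall>e. \<exists>H \<delta>. 0 < e \<longrightarrow> separated_homotopies X e H \<delta>"
    using SAP_separated_homotopies[OF assms] by blast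
  then obtain H D where HD: "\<And>e. 0 < e \<Longrightarrow> separated_homotopies X e (H e) (D e)"
    by (metis choice)
  define eps where "eps = tolerance D"
  have eps_pos: "0 < eps j" for j
    unfolding eps_def using separated_homotopiesD(1)[OF HD] by (rule tolerance_pos)
  have "homotopy_ladder X (\<lambda>j. H (eps j)) eps (\<lambda>j. D (eps j))"
  proof
    show "separated_homotopies X (eps j) (H (eps j)) (D (eps j))" for j by (rule HD[OF eps_pos])
    show "eps j \<le> 1 / (4 * real (Suc j))" for j unfolding eps_def by (rule tolerance_small)
    show "eps (Suc j) \<le> D (eps j) / 4" for j unfolding eps_def by simp
  qed
  then show ?thesis by (intro exI)
qed


locale controlled_ladder = homotopy_ladder +
  fixes \<phi> :: "'a::metric_space \<Rightarrow> real"
  assumes phi_cont: "continuous_on X \<phi>" and phi_pos: "\<And>x. x \<in> X \<Longrightarrow> 0 < \<phi> x"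
begin

(* The level of y is the integer part of 1 / phi y; the j-th switch is 0 when 1 / phi y is
   within 1/2 of j and 1 when it is at least 1 away from j. *)
definition level :: "'a \<Rightarrow> nat" where
  "level y = nat \<lfloor>1 / \<phi> y\<rfloor>"

definition switch :: "nat \<Rightarrow> 'a \<Rightarrow> real" where
  "switch j y = max 0 (min 1 (2 * \<bar>1 / \<phi> y - real j\<bar> - 1))"

primrec ladder :: "nat \<Rightarrow> nat \<Rightarrow> 'a \<Rightarrow> 'a" where
  "ladder n 0 y = y"
| "ladder n (Suc N) y = h N n (switch N y, ladder n N y)"

definition approx :: "nat \<Rightarrow> 'a \<Rightarrow> 'a" where
  "approx n y = ladder n (level y + 2) y"

lemma level_bounds:
  assumes "y \<in> X"
  shows "real (level y) \<le> 1 / \<phi> y" "1 / \<phi> y < real (level y) + 1"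
proof -
  have "0 \<le> \<lfloor>1 / \<phi> y\<rfloor>" using phi_pos[OF assms] by simp
  then have "real (level y) = real_of_int \<lfloor>1 / \<phi> y\<rfloor>" unfolding level_def by simp
  then show "real (level y) \<le> 1 / \<phi> y" "1 / \<phi> y < real (level y) + 1" by linarith+
qed

lemma switch_range: "0 \<le> switch j y" "switch j y \<le> 1"
  unfolding switch_def by auto

lemma inverse_phi_cont: "continuous_on X (\<lambda>y. 1 / \<phi> y)"
  using phi_cont phi_pos by (intro continuous_intros) (auto simp: less_le)

lemma switch_cont: "continuous_on X (switch j)"
  unfolding switch_def[abs_def]
  by (intro continuous_on_max continuous_on_min continuous_on_diff continuous_on_mult
      continuous_on_rabs continuous_on_const inverse_phi_cont)

lemma switch_one:
  assumes "y \<in> X" "j < level y \<or> level y + 2 \<le> j"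
  shows "switch j y = 1"
proof -
  have "1 \<le> \<bar>1 / \<phi> y - real j\<bar>" using assms(2) level_bounds[OF assms(1)] by auto
  then show ?thesis unfolding switch_def by simp
qed

lemma switch_zero: "\<bar>1 / \<phi> y - real j\<bar> \<le> 1/2 \<Longrightarrow> switch j y = 0"
  unfolding switch_def by simp

lemma ladder_cont: "continuous_on X (ladder n N) \<and> ladder n N ` X \<subseteq> X"
proof (induction N)
  case (Suc N)
  have img: "(\<lambda>y. (switch N y, ladder n N y)) ` X \<subseteq> {0..1} \<times> X"
    using Suc switch_range by auto
  have "continuous_on X (\<lambda>y. (switch N y, ladder n N y))"
    using Suc switch_cont by (auto intro!: continuous_intros)
  then show ?case
    using continuous_on_compose2[OF h_cont _ img] img h_into by auto
qed simp

lemma ladder_below: "y \<in> X \<Longrightarrow> N \<le> level y \<Longrightarrow> ladder n N y = y"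
  by (induction N) (simp_all add: switch_one h_end)

(* Above level + 2 all switches are 1, so the ladder has stabilised. *)
lemma ladder_above:
  assumes "y \<in> X" "level y + 2 \<le> N"
  shows "ladder n N y = approx n y"
  using assms(2)
proof (induction N rule: nat_induct_at_least)
  case (Suc N)
  have "ladder n N y \<in> X" using ladder_cont assms(1) by blast
  then show ?case using Suc switch_one[OF assms(1)] h_end by simp
qed (simp add: approx_def)

lemma approx_two_steps:
  assumes "y \<in> X"
  shows "approx n y =
    h (level y + 1) n (switch (level y + 1) y, h (level y) n (switch (level y) y, y))"
  using ladder_below[OF assms order_refl] by (simp add: approx_def numeral_2_eq_2)

lemma approx_into: "y \<in> X \<Longrightarrow> approx n y \<in> X"
  using approx_two_steps by (simp add: h_into switch_range)

(* Each of the two steps moves y by at most eps, and eps_k + eps_(k+1) < 1/(k+1) < phi y. *)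
lemma approx_close:
  assumes y: "y \<in> X"
  shows "dist (approx n y) y < \<phi> y"
proof -
  let ?k = "level y"
  let ?z = "h ?k n (switch ?k y, y)"
  have "?z \<in> X" using y by (simp add: h_into switch_range)
  then have "dist (approx n y) ?z \<le> eps (?k + 1)"
    using approx_two_steps[OF y] h_close switch_range by simp
  moreover have "dist ?z y \<le> eps ?k" using y h_close switch_range by simp
  ultimately have "dist (approx n y) y \<le> eps (?k + 1) + eps ?k"
    using dist_triangle[of "approx n y" y ?z] by linarith
  also have "\<dots> \<le> 1 / real (?k + 1) / 4 + 1 / real (?k + 1) / 4"
  proof -
    have "eps j \<le> 1 / real (?k + 1) / 4" if "?k \<le> j" for j
    proof -
      have "1 / (4 * real (Suc j)) \<le> 1 / real (?k + 1) / 4" using that by (simp add: frac_le)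
      then show ?thesis using eps_small[of j] by linarith
    qed
    then show ?thesis by (intro add_mono) simp_all
  qed
  also have "\<dots> < 1 / real (?k + 1)"
  proof -
    have "0 < 1 / real (?k + 1)" by simp
    then show ?thesis by linarith
  qed
  also have "\<dots> < \<phi> y"
    using level_bounds[OF y] phi_pos[OF y] by (simp add: field_simps)
  finally show ?thesis .
qed

(* Near x, approx n agrees with the continuous map ladder n M for a fixed M. *)
lemma approx_cont: "continuous_on X (approx n)"
  unfolding continuous_on_eq_continuous_within
proof
  fix x assume x: "x \<in> X"
  define M where "M = level x + 3"
  have "0 < real M - 1 - 1 / \<phi> x" using level_bounds[OF x] unfolding M_def by simp
  then obtain d where d: "d > 0"
    "\<And>y. y \<in> X \<Longrightarrow> dist y x < d \<Longrightarrow> dist (1 / \<phi> y) (1 / \<phi> x) < real M - 1 - 1 / \<phi> x"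
    using inverse_phi_cont x unfolding continuous_on_iff by blast
  have "ladder n M y = approx n y" if "y \<in> X" "dist y x < d" for y
  proof (rule ladder_above[OF that(1)])
    have "1 / \<phi> y < real M - 1" using d(2)[OF that] by (simp add: dist_real_def abs_less_iff)
    then show "level y + 2 \<le> M" using level_bounds[OF that(1)] by linarith
  qed
  moreover have "continuous (at x within X) (ladder n M)"
    using ladder_cont x continuous_on_eq_continuous_within by blast
  ultimately show "continuous (at x within X) (approx n)"
    by (rule continuous_transform_within[OF _ d(1) x, rotated]) simp
qed

(* Since one of the two switches of y vanishes, approx n y lies close to the separated image
   of h j n (0,-) for j = level y or j = level y + 1. *)
lemma approx_near_center:
  assumes y: "y \<in> X"
  shows "\<exists>j\<le>level y + 1. \<exists>a\<in>X. dist (approx n y) (h j n (0, a)) \<le> eps (Suc j)"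
proof (cases "1 / \<phi> y - real (level y) \<le> 1/2")
  case True
  then have "switch (level y) y = 0" using level_bounds[OF y] by (intro switch_zero) simp
  then have "dist (approx n y) (h (level y) n (0, y)) \<le> eps (Suc (level y))"
    using approx_two_steps[OF y] h_close h_into y switch_range by simp
  then show ?thesis using y by (intro exI[of _ "level y"]) auto
next
  case False
  let ?z = "h (level y) n (switch (level y) y, y)"
  have "switch (level y + 1) y = 0" using False level_bounds[OF y] by (intro switch_zero) simp
  then have "approx n y = h (level y + 1) n (0, ?z)" using approx_two_steps[OF y] by simp
  moreover have "0 \<le> eps (Suc (level y + 1))"
    using order_trans[OF zero_le_dist h_close[of 0 y]] y by simp
  moreover have "?z \<in> X" using y by (simp add: h_into switch_range)
  ultimately show ?thesis by (intro exI[of _ "level y + 1"] conjI bexI[of _ ?z]) simp_all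
qed

(* Points whose phi-ball reaches close to x have bounded level: either phi y is large, or
   y itself is close to x and phi y is comparable to phi x. *)
lemma level_bounded_near:
  assumes x: "x \<in> X"
  obtains \<rho> K where "\<rho> > 0" "\<And>y. y \<in> X \<Longrightarrow> dist y x < \<phi> y + \<rho> \<Longrightarrow> level y \<le> K"
proof -
  obtain \<rho> where \<rho>: "\<rho> > 0" "\<And>y. y \<in> X \<Longrightarrow> dist y x < \<rho> \<Longrightarrow> dist (\<phi> y) (\<phi> x) < \<phi> x / 2"
    using phi_cont[unfolded continuous_on_iff] x phi_pos[OF x] by (metis half_gt_zero)
  define c where "c = min (\<rho> / 2) (\<phi> x / 2)"
  have c: "c > 0" using \<rho> phi_pos[OF x] unfolding c_def by simp
  have "level y \<le> nat \<lfloor>1 / c\<rfloor>" if y: "y \<in> X" "dist y x < \<phi> y + \<rho> / 2" for y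
  proof -
    have "c \<le> \<phi> y"
    proof (cases "\<rho> / 2 \<le> \<phi> y")
      case False
      then have "dist (\<phi> y) (\<phi> x) < \<phi> x / 2" using y \<rho>(2) by simp
      then have "\<phi> x / 2 \<le> \<phi> y" unfolding dist_real_def by arith
      then show ?thesis unfolding c_def by (simp add: min_le_iff_disj)
    qed (simp add: c_def)
    then have "1 / \<phi> y \<le> 1 / c" using c by (simp add: frac_le)
    then show ?thesis unfolding level_def by (intro nat_mono floor_mono)
  qed
  then show ?thesis using \<rho>(1) by (intro that[of "\<rho> / 2" "nat \<lfloor>1 / c\<rfloor>"]) auto
qed

lemma approx_locally_finite:
  assumes x: "x \<in> X"
  shows "\<exists>r>0. finite {n. approx n ` X \<inter> ball x r \<noteq> {}}"
proof -
  obtain \<rho> K where \<rho>: "\<rho> > 0" and K: "\<And>y. y \<in> X \<Longrightarrow> dist y x < \<phi> y + \<rho> \<Longrightarrow> level y \<le> K"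
    using level_bounded_near[OF x] by blast
  define r where "r = min \<rho> (Min ((\<lambda>j. del j / 4) ` {..K+1}))"
  have r: "r > 0" unfolding r_def using \<rho> del_pos by simp
  have "r \<le> \<rho>" unfolding r_def by simp
  have r_del: "r \<le> del j / 4" if "j \<le> K + 1" for j
    unfolding r_def using that by (intro min.coboundedI2 Min_le) auto
  have "{n. approx n ` X \<inter> ball x r \<noteq> {}} \<subseteq>
      (\<Union>j\<le>K+1. {n. \<exists>a\<in>X. dist x (h j n (0, a)) < del j / 2})"
  proof
    fix n assume "n \<in> {n. approx n ` X \<inter> ball x r \<noteq> {}}"
    then obtain y where y: "y \<in> X" "dist x (approx n y) < r" by auto
    have "dist y x < \<phi> y + \<rho>"
      using approx_close[OF y(1), of n] y(2) dist_triangle3[of y x "approx n y"]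
        dist_commute[of x "approx n y"] \<open>r \<le> \<rho>\<close> by linarith
    then have "level y \<le> K" using K y(1) by blast
    obtain j a where j: "j \<le> level y + 1" "a \<in> X" "dist (approx n y) (h j n (0, a)) \<le> eps (Suc j)"
      using approx_near_center[OF y(1)] by blast
    have "j \<le> K + 1" using j(1) \<open>level y \<le> K\<close> by simp
    have "dist x (h j n (0, a)) < del j / 2"
      using dist_triangle[of x "h j n (0, a)" "approx n y"] y(2) j(3) eps_next[of j]
        r_del[OF \<open>j \<le> K + 1\<close>] by linarith
    then show "n \<in> (\<Union>j\<le>K+1. {n. \<exists>a\<in>X. dist x (h j n (0, a)) < del j / 2})"
      using j(2) \<open>j \<le> K + 1\<close> by blast
  qed
  moreover have "finite (\<Union>j\<le>K+1. {n. \<exists>a\<in>X. dist x (h j n (0, a)) < del j / 2})"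
    by (intro finite_UN_I finite_atMost separated_homotopies_near_point[OF separated])
  ultimately have "finite {n. approx n ` X \<inter> ball x r \<noteq> {}}" by (rule finite_subset)
  then show ?thesis using r by blast
qed

end

lemma SAP_controlled_approximations:
  fixes X :: "'a::metric_space set"
  assumes "SAP X" "continuous_on X \<phi>" "\<And>x. x \<in> X \<Longrightarrow> 0 < \<phi> x"
  obtains g :: "nat \<Rightarrow> 'a \<Rightarrow> 'a" where
    "\<And>n. continuous_on X (g n)" "\<And>n. g n ` X \<subseteq> X"
    "\<And>n y. y \<in> X \<Longrightarrow> dist (g n y) y < \<phi> y"
    "\<And>x. x \<in> X \<Longrightarrow> \<exists>r>0. finite {n. g n ` X \<inter> ball x r \<noteq> {}}"
proof -
  obtain h eps del where "homotopy_ladder X h eps del"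
    using SAP_homotopy_ladder[OF assms(1)] by blast
  then interpret controlled_ladder X h eps del \<phi>
    by (intro controlled_ladder.intro controlled_ladder_axioms.intro assms)
  show ?thesis
    by (rule that[of approx]) (auto simp: approx_cont approx_into approx_close approx_locally_finite)
qed

lemma LFAP_top_of_setI:
  fixes X :: "'a::metric_space set"
  assumes "\<And>\<U>. \<forall>U\<in>\<U>. openin (top_of_set X) U \<Longrightarrow> X \<subseteq> \<Union>\<U> \<Longrightarrow>
    \<exists>g :: nat \<Rightarrow> 'a \<Rightarrow> 'a.
      (\<forall>n. continuous_on X (g n) \<and> g n ` X \<subseteq> X \<and> (\<forall>x\<in>X. \<exists>U\<in>\<U>. x \<in> U \<and> g n x \<in> U)) \<and>
      (\<forall>x\<in>X. \<exists>r>0. finite {n. g n ` X \<inter> ball x r \<noteq> {}})"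
  shows "LFAP (top_of_set X)"
  unfolding LFAP_def
proof (intro allI impI)
  fix \<U> :: "'a set set"
  assume "(\<forall>U\<in>\<U>. openin (top_of_set X) U) \<and> topspace (top_of_set X) \<subseteq> \<Union>\<U>"
  then have opn: "\<forall>U\<in>\<U>. openin (top_of_set X) U" and cov: "X \<subseteq> \<Union>\<U>" by auto
  obtain g :: "nat \<Rightarrow> 'a \<Rightarrow> 'a" where
    "(\<forall>n. continuous_on X (g n) \<and> g n ` X \<subseteq> X \<and> (\<forall>x\<in>X. \<exists>U\<in>\<U>. x \<in> U \<and> g n x \<in> U)) \<and>
     (\<forall>x\<in>X. \<exists>r>0. finite {n. g n ` X \<inter> ball x r \<noteq> {}})"
    using assms[OF opn cov] ..
  then have g: "\<And>n. continuous_on X (g n)" "\<And>n. g n ` X \<subseteq> X"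
      and near: "\<And>n x. x \<in> X \<Longrightarrow> \<exists>U\<in>\<U>. x \<in> U \<and> g n x \<in> U"
      and g_lf: "\<And>x. x \<in> X \<Longrightarrow> \<exists>r>0. finite {n. g n ` X \<inter> ball x r \<noteq> {}}"
    by auto
  (* Within X, the relatively open set X \<inter> ball x r meets exactly the same images. *)
  have lf: "\<exists>V. openin (top_of_set X) V \<and> x \<in> V \<and> finite {n. g n ` X \<inter> V \<noteq> {}}"
    if x: "x \<in> X" for x
  proof -
    obtain r where r: "r > 0" "finite {n. g n ` X \<inter> ball x r \<noteq> {}}" using g_lf[OF x] by blast
    have "g n ` X \<inter> (X \<inter> ball x r) = g n ` X \<inter> ball x r" for n
      using g(2)[of n] by blast
    then have "{n. g n ` X \<inter> (X \<inter> ball x r) \<noteq> {}} = {n. g n ` X \<inter> ball x r \<noteq> {}}"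
      by simp
    moreover have "openin (top_of_set X) (X \<inter> ball x r)" by (simp add: openin_open_Int)
    ultimately show ?thesis using x r by (intro exI[of _ "X \<inter> ball x r"]) simp
  qed
  show "\<exists>f :: nat \<Rightarrow> 'a \<Rightarrow> 'a. (\<forall>n. continuous_map (top_of_set X) (top_of_set X) (f n) \<and>
              (\<forall>x\<in>topspace (top_of_set X). \<exists>U\<in>\<U>. x \<in> U \<and> f n x \<in> U)) \<and>
           (\<forall>x\<in>topspace (top_of_set X). \<exists>V. openin (top_of_set X) V \<and> x \<in> V \<and>
              finite {n. f n ` topspace (top_of_set X) \<inter> V \<noteq> {}})"
  proof (intro exI[of _ g] conjI allI ballI)
    show "continuous_map (top_of_set X) (top_of_set X) (g n)" for n
      using g by (simp add: continuous_map_subtopology_eu image_subset_iff_funcset)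
  qed (use near lf in simp_all)
qed

theorem lemma1:
  fixes X :: "'a::metric_space set"
  assumes "SAP X"
  shows "LFAP (top_of_set X)"
proof (rule LFAP_top_of_setI)
  fix \<U> :: "'a set set"
  assume opn: "\<forall>U\<in>\<U>. openin (top_of_set X) U" and cov: "X \<subseteq> \<Union>\<U>"
  obtain \<phi> where \<phi>: "continuous_on X \<phi>" "\<And>x. x \<in> X \<Longrightarrow> 0 < \<phi> x"
      and \<phi>_cover: "\<And>x. x \<in> X \<Longrightarrow> \<exists>U\<in>\<U>. ball x (\<phi> x) \<inter> X \<subseteq> U"
    using lebesgue_function[OF opn cov] by blast
  obtain g :: "nat \<Rightarrow> 'a \<Rightarrow> 'a" where g: "\<And>n. continuous_on X (g n)" "\<And>n. g n ` X \<subseteq> X"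
      and g_close: "\<And>n y. y \<in> X \<Longrightarrow> dist (g n y) y < \<phi> y"
      and g_lf: "\<And>x. x \<in> X \<Longrightarrow> \<exists>r>0. finite {n. g n ` X \<inter> ball x r \<noteq> {}}"
    using SAP_controlled_approximations[OF assms \<phi>] by blast
  (* x and g n x both lie in the ball of radius phi x about x, hence in one cover member. *)
  have "\<exists>U\<in>\<U>. x \<in> U \<and> g n x \<in> U" if x: "x \<in> X" for n x
  proof -
    have "x \<in> ball x (\<phi> x) \<inter> X" "g n x \<in> ball x (\<phi> x) \<inter> X"
      using x \<phi>(2)[OF x] g_close[OF x, of n] g(2)[of n] by (auto simp: dist_commute)
    then show ?thesis using \<phi>_cover[OF x] by blast
  qed
  then show "\<exists>g :: nat \<Rightarrow> 'a \<Rightarrow> 'a.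
      (\<forall>n. continuous_on X (g n) \<and> g n ` X \<subseteq> X \<and> (\<forall>x\<in>X. \<exists>U\<in>\<U>. x \<in> U \<and> g n x \<in> U)) \<and>
      (\<forall>x\<in>X. \<exists>r>0. finite {n. g n ` X \<inter> ball x r \<noteq> {}})"
    using g g_lf by blast
qed

end
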